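(* Suppose Assumptions 1, 2, 6 and 7 hold (Assumption 5 is not required), and all eight cells $\{D=d,G=g,T=t\}$ have positive probability. For $d\in\{0,1\}$ and $g\in\{0,1\}$ let $p_{d|gt}=P(D_{gt}=d)$, $\lambda_{gd}=p_{d|g1}/p_{d|g0}$, $F_{dgt}=F_{Y_{dgt}}$ and $H_d=F_{d10}\circ F_{d00}^{-1}$. Let $S'=\{D(0)\neq D(1),\,G=0\}$ and let $F_{Y_{01}(d)\mid S'}$ denote the cdf of $Y(d)$ conditional on $S'$ and $T=1$ (when $P(S')=0$, $\lambda_{0d}=1$ and the corresponding term below is omitted). Then for $d\in\{0,1\}$, $$F_{Y(d)\mid S,T=1}=\frac{p_{d|11}F_{d11}-p_{d|10}\,H_d\circ\big(\lambda_{0d}F_{d01}+(1-\lambda_{0d})F_{Y_{01}(d)\mid S'}\big)}{p_{d|11}-p_{d|10}}.$$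
   Context: Standing framework. Let $(Y(0),Y(1),V,G,T)$ be random variables on a common probability space, with $G\in\{0,1\}$ (group; $G=1$ is the "treatment group"), $T\in\{0,1\}$ (period), $V$ real-valued, and let $(v_{gt})_{(g,t)\in\{0,1\}^2}$ be real constants. The treatment is $D=1\{V\geq v_{GT}\}$ and the potential treatments are $D(t)=1\{V\geq v_{Gt}\}$, $t\in\{0,1\}$, so that $D=D(T)$. The observed outcome is $Y=DY(1)+(1-D)Y(0)$. For any random variable $R$, $R_{gt}$ denotes a random variable distributed as $R$ conditional on $\{G=g,T=t\}$ and $R_{dgt}$ one distributed as $R$ conditional on $\{D=d,G=g,T=t\}$. $F_R$ is the cdf of $R$, $\mathrm{Supp}(R)$ its support, and for a nondecreasing $F$, $F^{-1}(q)=\inf\{x\in\mathbb{R}:F(x)\geq q\}$. Let $S=\{D(0)<D(1),\,G=1\}$. Assumption 1: $D=1\{V\geq v_{GT}\}$ with $V$ independent of $T$ conditional on $G$. Assumption 2: $E(D_{11})>E(D_{10})$ and $E(D_{11})-E(D_{10})>E(D_{01})-E(D_{00})$. Assumption 6: for $d\in\{0,1\}$, $Y(d)=h_d(U_d,T)$ with $U_d$ real-valued and $u\mapsto h_d(u,t)$ strictly increasing for each $t\in\{0,1\}$; moreover $U_d$ is independent of $T$ conditional on $(G,D(0))$. Assumption 7: (i) $\mathrm{Supp}(Y_{dgt})=\mathrm{Supp}(Y)$ for all $(d,g,t)$, and $\mathrm{Supp}(Y)$ is a closed interval of $\mathbb{R}$; (ii) each $F_{Y_{dgt}}$ is continuous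 on $\mathbb{R}$ and strictly increasing on $\mathrm{Supp}(Y)$. *)

theory Defs
  imports "HOL-Probability.Probability"
begin

definition ccdf :: "'a measure \<Rightarrow> ('a \<Rightarrow> real) \<Rightarrow> 'a set \<Rightarrow> real \<Rightarrow> real" where
  "ccdf M X A y = measure M {\<omega> \<in> A. X \<omega> \<le> y} / measure M A"

definition csupp :: "'a measure \<Rightarrow> ('a \<Rightarrow> real) \<Rightarrow> 'a set \<Rightarrow> real set" where
  "csupp M X A = {x. \<forall>e>0. measure M {\<omega> \<in> A. X \<omega> \<in> ball x e} > 0}"

definition qinv :: "(real \<Rightarrow> real) \<Rightarrow> real \<Rightarrow> ereal" where
  "qinv F q = Inf {ereal x | x. q \<le> F x}"

definition cdf_ext :: "(real \<Rightarrow> real) \<Rightarrow> ereal \<Rightarrow> real" where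
  "cdf_ext F e = (case e of ereal x \<Rightarrow> F x | PInfty \<Rightarrow> 1 | MInfty \<Rightarrow> 0)"

end

theory Submission
  imports Defs
begin

text \<open>
  By Assumption 1 the share of units with \<open>D(0) = d\<close> in each group does not change over time,
  and by Assumption 6 neither does the law of \<open>U_d\<close> among them; as \<open>Y(d) = h_d(U_d, T)\<close> with
  \<open>h_d\<close> increasing, the cdf of \<open>Y(d)\<close> on \<open>{D(0) = d, G = 1, T = 1}\<close> is the image of that on
  \<open>{D(0) = d, G = 0, T = 1}\<close> under the changes-in-changes map \<open>H_d = F_d10 \<circ> F_d00\<^sup>-\<^sup>1\<close>.
  Treatment thresholds are monotone in time within each group, so the observed cell
  \<open>{D = d, G = g, T = 1}\<close> differs from \<open>{D(0) = d, G = g, T = 1}\<close> exactly by the switchers of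
  group \<open>g\<close>, added or removed depending on \<open>d\<close> and on the direction of the switch.
  In group 1 the switchers are the compliers \<open>S\<close>, whose cdf is thus a difference of two
  observable cdfs; in group 0 the same bookkeeping expresses the cdf on \<open>{D(0) = d}\<close> through
  \<open>F_d01\<close> and the switchers \<open>S'\<close>.
\<close>

section \<open>The quantile transform\<close>

lemma flat_interval_meets_at_most_once:
  fixes F :: "real \<Rightarrow> real"
  assumes mono: "mono F" and smono: "strict_mono_on Sp F" and flat: "F x1 = F x2"
  shows "\<exists>c. Sp \<inter> {x1..x2} \<subseteq> {c}"
proof (cases "Sp \<inter> {x1..x2} = {}")
  case False
  have no_two: "\<not> a < b" if "a \<in> Sp \<inter> {x1..x2}" "b \<in> Sp \<inter> {x1..x2}" for a b
    using strict_mono_onD[OF smono, of a b] monoD[OF mono, of x1 a] monoD[OF mono, of b x2]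
      that flat by force
  from False obtain c where c: "c \<in> Sp \<inter> {x1..x2}" by blast
  have "Sp \<inter> {x1..x2} \<subseteq> {c}"
  proof
    fix z assume "z \<in> Sp \<inter> {x1..x2}"
    with c no_two[of z c] no_two[of c z] show "z \<in> {c}" by auto
  qed
  then show ?thesis ..
qed blast

lemma cdf_ext_qinv_zero:
  assumes "\<And>x. F0 x \<ge> 0"
  shows "cdf_ext F1 (qinv F0 0) = 0"
proof -
  have le: "qinv F0 0 \<le> ereal x" for x
    unfolding qinv_def by (rule Inf_lower) (use assms in auto)
  have "qinv F0 0 = MInfty"
  proof (cases "qinv F0 0")
    case (real r)
    with le[of "r - 1"] show ?thesis by simp
  next
    case PInf
    with le[of 0] show ?thesis by simp
  qed simp
  then show ?thesis by (simp add: cdf_ext_def)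
qed

lemma cdf_ext_qinv_comp:
  fixes F0 F1 :: "real \<Rightarrow> real"
  assumes mono0: "mono F0" and cont0: "continuous_on UNIV F0"
    and mono1: "mono F1" and lim1: "(F1 \<longlongrightarrow> 0) at_bot"
    and flat: "\<And>x1 x2. x1 \<le> x2 \<Longrightarrow> F0 x1 = F0 x2 \<Longrightarrow> F1 x1 = F1 x2"
  shows "cdf_ext F1 (qinv F0 (F0 x)) = F1 x"
proof -
  define Q where "Q = {ereal z | z. F0 x \<le> F0 z}"
  have q: "qinv F0 (F0 x) = Inf Q" unfolding qinv_def Q_def ..
  have le: "Inf Q \<le> ereal x" unfolding Q_def by (rule Inf_lower) auto
  show ?thesis
  proof (cases "Inf Q")
    case PInf
    with le show ?thesis by simp
  next
    case MInf
    have F0_flat: "F0 z = F0 x" if "z \<le> x" for z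
    proof -
      from MInf have "Inf Q < ereal z" by simp
      then obtain w where "F0 x \<le> F0 w" "w < z"
        unfolding Q_def by (auto simp: Inf_less_iff)
      with mono0 that show ?thesis by (meson antisym less_imp_le monoD order_trans)
    qed
    have "\<forall>\<^sub>F z in at_bot. F1 z = F1 x"
      by (rule eventually_mono[OF eventually_le_at_bot[of x]]) (intro flat F0_flat)
    then have "(F1 \<longlongrightarrow> F1 x) at_bot"
      by (simp add: tendsto_eventually eventually_mono)
    then have "F1 x = 0"
      using lim1 by (rule tendsto_unique[OF trivial_limit_at_bot_linorder])
    with q MInf show ?thesis by (simp add: cdf_ext_def)
  next
    case (real r)
    have "F0 x \<le> F0 r"
    proof (rule ccontr)
      assume "\<not> F0 x \<le> F0 r"
      moreover have "isCont F0 r"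
        using cont0 by (simp add: continuous_on_eq_continuous_at)
      ultimately obtain e where e: "e > 0" "\<And>z. dist z r < e \<Longrightarrow> dist (F0 z) (F0 r) < F0 x - F0 r"
        unfolding continuous_at_eps_delta by (meson diff_gt_0_iff_gt not_le)
      from real have "Inf Q < ereal (r + e)" using e by simp
      then obtain z where z: "F0 x \<le> F0 z" "z < r + e" "ereal z \<in> Q"
        unfolding Q_def by (auto simp: Inf_less_iff)
      have "r \<le> z" using Inf_lower[OF z(3)] real by simp
      with z e(2)[of z] show False by (simp add: dist_real_def)
    qed
    moreover have "r \<le> x" using le real by simp
    ultimately have "F1 r = F1 x"
      using flat mono0 by (metis antisym monoD)
    with q real show ?thesis by (simp add: cdf_ext_def)
  qed
qed

lemma cdf_ext_qinv_one:
  fixes F0 F1 :: "real \<Rightarrow> real"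
  assumes mono0: "mono F0" and cont0: "continuous_on UNIV F0" and le0: "\<And>x. F0 x \<le> 1"
    and mono1: "mono F1" and bot1: "(F1 \<longlongrightarrow> 0) at_bot" and top1: "(F1 \<longlongrightarrow> 1) at_top"
    and flat: "\<And>x1 x2. x1 \<le> x2 \<Longrightarrow> F0 x1 = F0 x2 \<Longrightarrow> F1 x1 = F1 x2"
  shows "cdf_ext F1 (qinv F0 1) = 1"
proof (cases "\<exists>x. F0 x = 1")
  case True
  then obtain x where x: "F0 x = 1" ..
  have F0_flat: "F0 z = F0 x" if "x \<le> z" for z
    using mono0 le0 x that by (metis antisym monoD)
  have "\<forall>\<^sub>F z in at_top. F1 z = F1 x"
    by (rule eventually_mono[OF eventually_ge_at_top[of x]]) (metis flat F0_flat)
  then have "(F1 \<longlongrightarrow> F1 x) at_top"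
    by (simp add: tendsto_eventually eventually_mono)
  then have "F1 x = 1"
    using top1 by (rule tendsto_unique[OF trivial_limit_at_top_linorder])
  then show ?thesis
    using cdf_ext_qinv_comp[OF mono0 cont0 mono1 bot1 flat, of x] x by simp
next
  case False
  then have "{ereal z | z. 1 \<le> F0 z} = {}"
    using le0 by (auto intro: antisym)
  then have "qinv F0 1 = PInfty"
    unfolding qinv_def by (simp add: top_ereal_def)
  then show ?thesis by (simp add: cdf_ext_def)
qed

lemma down_closed_real_cases:
  fixes D :: "real set"
  assumes down: "\<And>u w. u \<le> w \<Longrightarrow> w \<in> D \<Longrightarrow> u \<in> D"
  obtains "D = {}" | "D = UNIV" | a where "D = {..<a}" | a where "D = {..a}"
proof -
  consider "D = {}" | "D = UNIV" | "D \<noteq> {}" "D \<noteq> UNIV" by blast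
  then show thesis
  proof cases
    case 1
    then show thesis by (rule that(1))
  next
    case 2
    then show thesis by (rule that(2))
  next
    case 3
    then obtain w where "w \<notin> D" by blast
    with down have bdd: "bdd_above D"
      by (meson bdd_aboveI linear)
    have upper: "u \<le> Sup D" if "u \<in> D" for u
      using cSup_upper[OF that bdd] .
    show thesis
    proof (cases "Sup D \<in> D")
      case True
      then have "D = {..Sup D}"
        using down upper by auto
      then show thesis by (rule that(4))
    next
      case False
      have "u \<in> D" if "u < Sup D" for u
        using less_cSup_iff[OF \<open>D \<noteq> {}\<close> bdd] that down by (meson less_imp_le)
      with False upper have "D = {..<Sup D}"
        by (auto simp: order.strict_iff_order)
      then show thesis by (rule that(3))
    qed
  qed
qed

section \<open>Conditional distribution functions\<close>

lemma sets_Collect_restrict_vimage: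
  assumes "A \<in> sets M" "X \<in> measurable M N" "B \<in> sets N"
  shows "{\<omega>\<in>A. X \<omega> \<in> B} \<in> sets M"
proof -
  have "{\<omega>\<in>A. X \<omega> \<in> B} = A \<inter> (X -` B \<inter> space M)"
    using sets.sets_into_space[OF assms(1)] by auto
  then show ?thesis using assms by auto
qed

lemma ccdf_eq_measure_Int:
  assumes "A \<in> sets M"
  shows "ccdf M X A y = measure M (A \<inter> {\<omega> \<in> space M. X \<omega> \<le> y}) / measure M A"
proof -
  have "{\<omega> \<in> A. X \<omega> \<le> y} = A \<inter> {\<omega> \<in> space M. X \<omega> \<le> y}"
    using sets.sets_into_space[OF assms] by blast
  then show ?thesis by (simp add: ccdf_def)
qed

lemma (in finite_measure) measure_mult_ccdf:
  assumes "A \<in> sets M"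
  shows "measure M A * ccdf M X A y = measure M (A \<inter> {\<omega> \<in> space M. X \<omega> \<le> y})"
proof (cases "measure M A = 0")
  case True
  moreover have "measure M (A \<inter> {\<omega> \<in> space M. X \<omega> \<le> y}) \<le> measure M A"
    using assms by (intro finite_measure_mono) auto
  ultimately show ?thesis by (simp add: ccdf_def measure_le_0_iff)
qed (simp add: ccdf_eq_measure_Int[OF assms])

definition cond_distr :: "'a measure \<Rightarrow> 'a set \<Rightarrow> ('a \<Rightarrow> real) \<Rightarrow> real measure" where
  "cond_distr M A X = distr (uniform_measure M A) borel X"

context prob_space
begin

lemma real_distribution_cond_distr:
  assumes "A \<in> events" "prob A > 0" "X \<in> borel_measurable M"
  shows "real_distribution (cond_distr M A X)"
proof -
  have "prob_space (uniform_measure M A)"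
    using assms by (intro prob_space_uniform_measure) (auto simp: emeasure_eq_measure)
  then show ?thesis
    unfolding cond_distr_def using assms(3) by (simp add: prob_space.real_distribution_distr)
qed

lemma measure_cond_distr:
  assumes "A \<in> events" "prob A > 0" "X \<in> borel_measurable M" "B \<in> sets borel"
  shows "measure (cond_distr M A X) B = prob {\<omega>\<in>A. X \<omega> \<in> B} / prob A"
proof -
  have "{\<omega>\<in>A. X \<omega> \<in> B} = A \<inter> (X -` B \<inter> space M)"
    using sets.sets_into_space[OF assms(1)] by auto
  then show ?thesis
    using assms by (simp add: cond_distr_def measure_distr emeasure_eq_measure)
qed

lemma ccdf_eq_cdf_cond_distr:
  assumes "A \<in> events" "prob A > 0" "X \<in> borel_measurable M"
  shows "ccdf M X A = cdf (cond_distr M A X)"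
proof
  fix x
  show "ccdf M X A x = cdf (cond_distr M A X) x"
    using measure_cond_distr[OF assms, of "{..x}"] by (simp add: ccdf_def cdf_def)
qed

lemma ccdf_mono:
  assumes "A \<in> events" "prob A > 0" "X \<in> borel_measurable M"
  shows "mono (ccdf M X A)"
proof -
  interpret \<mu>: real_distribution "cond_distr M A X"
    using real_distribution_cond_distr[OF assms] .
  show ?thesis by (simp add: ccdf_eq_cdf_cond_distr[OF assms] mono_def \<mu>.cdf_nondecreasing)
qed

lemma ccdf_le_1:
  assumes "A \<in> events" "prob A > 0" "X \<in> borel_measurable M"
  shows "ccdf M X A x \<le> 1"
proof -
  interpret \<mu>: real_distribution "cond_distr M A X"
    using real_distribution_cond_distr[OF assms] .
  show ?thesis by (simp add: ccdf_eq_cdf_cond_distr[OF assms] \<mu>.cdf_bounded_prob)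
qed

lemma ccdf_tendsto_at_bot:
  assumes "A \<in> events" "prob A > 0" "X \<in> borel_measurable M"
  shows "(ccdf M X A \<longlongrightarrow> 0) at_bot"
proof -
  interpret \<mu>: real_distribution "cond_distr M A X"
    using real_distribution_cond_distr[OF assms] .
  show ?thesis by (simp add: ccdf_eq_cdf_cond_distr[OF assms] \<mu>.cdf_lim_at_bot)
qed

lemma ccdf_tendsto_at_top:
  assumes "A \<in> events" "prob A > 0" "X \<in> borel_measurable M"
  shows "(ccdf M X A \<longlongrightarrow> 1) at_top"
proof -
  interpret \<mu>: real_distribution "cond_distr M A X"
    using real_distribution_cond_distr[OF assms] .
  show ?thesis by (simp add: ccdf_eq_cdf_cond_distr[OF assms] \<mu>.cdf_lim_at_top_prob)
qed

lemma isCont_ccdf_iff: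
  assumes "A \<in> events" "prob A > 0" "X \<in> borel_measurable M"
  shows "isCont (ccdf M X A) x \<longleftrightarrow> prob {\<omega>\<in>A. X \<omega> = x} = 0"
proof -
  interpret \<mu>: real_distribution "cond_distr M A X"
    using real_distribution_cond_distr[OF assms] .
  show ?thesis
    using measure_cond_distr[OF assms, of "{x}"] assms(2)
    by (simp add: ccdf_eq_cdf_cond_distr[OF assms] \<mu>.isCont_cdf)
qed

lemma measure_null_outside_csupp:
  assumes A: "A \<in> events" and X: "X \<in> borel_measurable M"
    and "open W" and W: "W \<inter> csupp M X A = {}"
  shows "prob {\<omega>\<in>A. X \<omega> \<in> W} = 0"
proof -
  note sets_A = sets_Collect_restrict_vimage[OF A X]
  define \<B> where "\<B> = {ball x e | x e. ball x e \<subseteq> W \<and> prob {\<omega>\<in>A. X \<omega> \<in> ball x e} = 0}"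
  have "W \<subseteq> \<Union>\<B>"
  proof
    fix x assume "x \<in> W"
    with W have "x \<notin> csupp M X A" by auto
    then obtain e where "e > 0" "\<not> prob {\<omega>\<in>A. X \<omega> \<in> ball x e} > 0"
      unfolding csupp_def by blast
    then have e: "e > 0" "prob {\<omega>\<in>A. X \<omega> \<in> ball x e} = 0"
      by (simp_all add: not_less measure_le_0_iff)
    obtain r where r: "r > 0" "ball x r \<subseteq> W"
      using \<open>open W\<close> \<open>x \<in> W\<close> open_contains_ball by blast
    define e' where "e' = min e r"
    have "prob {\<omega>\<in>A. X \<omega> \<in> ball x e'} \<le> prob {\<omega>\<in>A. X \<omega> \<in> ball x e}"
      by (rule finite_measure_mono) (use sets_A[of "ball x e"] in \<open>auto simp: e'_def\<close>)
    then have "prob {\<omega>\<in>A. X \<omega> \<in> ball x e'} = 0"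
      using e(2) by (simp add: measure_le_0_iff)
    moreover have "ball x e' \<subseteq> W" "e' > 0"
      using e(1) r unfolding e'_def by auto
    ultimately have "ball x e' \<in> \<B>"
      unfolding \<B>_def by (intro CollectI exI[of _ x] exI[of _ e']) simp
    with \<open>e' > 0\<close> show "x \<in> \<Union>\<B>"
      by (meson UnionI centre_in_ball)
  qed
  moreover have "\<Union>\<B> \<subseteq> W" unfolding \<B>_def by auto
  moreover obtain \<B>' where \<B>': "\<B>' \<subseteq> \<B>" "countable \<B>'" "\<Union>\<B>' = \<Union>\<B>"
  proof (rule Lindelof)
    show "open B" if "B \<in> \<B>" for B
      using that unfolding \<B>_def by auto
  qed
  ultimately have "W = \<Union>\<B>'" by simp
  then have "{\<omega>\<in>A. X \<omega> \<in> W} = (\<Union>B\<in>\<B>'. {\<omega>\<in>A. X \<omega> \<in> B})" by auto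
  also have "\<dots> \<in> null_sets M"
  proof (rule null_sets_UN'[OF \<B>'(2)])
    fix B assume "B \<in> \<B>'"
    then obtain x e where "B = ball x e" "prob {\<omega>\<in>A. X \<omega> \<in> ball x e} = 0"
      using \<B>' unfolding \<B>_def by auto
    then show "{\<omega>\<in>A. X \<omega> \<in> B} \<in> null_sets M"
      using sets_A[of B] by (simp add: emeasure_eq_measure null_setsI)
  qed
  finally show ?thesis by (simp add: measure_eq_0_null_sets)
qed

lemma ccdf_flat_transfer:
  assumes A0: "A0 \<in> events" "prob A0 > 0" and A1: "A1 \<in> events" "prob A1 > 0"
    and X: "X \<in> borel_measurable M"
    and closed: "closed (csupp M X A1)" and smono: "strict_mono_on (csupp M X A1) (ccdf M X A0)"
    and cont: "continuous_on UNIV (ccdf M X A1)"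
    and "x1 \<le> x2" and flat: "ccdf M X A0 x1 = ccdf M X A0 x2"
  shows "ccdf M X A1 x1 = ccdf M X A1 x2"
proof -
  let ?Sp = "csupp M X A1" and ?\<mu> = "cond_distr M A1 X"
  interpret \<mu>: real_distribution ?\<mu>
    using real_distribution_cond_distr[OF A1 X] .
  have F1: "ccdf M X A1 = cdf ?\<mu>"
    using ccdf_eq_cdf_cond_distr[OF A1 X] .
  \<comment> \<open>Outside one point of the support, \<open>]x1, x2]\<close> carries no mass, and atoms are excluded by continuity.\<close>
  obtain c where c: "?Sp \<inter> {x1..x2} \<subseteq> {c}"
    using flat_interval_meets_at_most_once[OF ccdf_mono[OF A0 X] smono flat] by blast
  define W where "W = {x1<..<x2} - ?Sp"
  have "open W" "W \<inter> ?Sp = {}"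
    using closed by (auto simp: W_def open_Diff)
  then have "prob {\<omega>\<in>A1. X \<omega> \<in> W} = 0"
    by (rule measure_null_outside_csupp[OF A1(1) X])
  then have "W \<in> null_sets ?\<mu>"
    using measure_cond_distr[OF A1 X, of W] \<open>open W\<close> by (auto simp: \<mu>.emeasure_eq_measure)
  moreover have "{z} \<in> null_sets ?\<mu>" for z
    using cont F1 \<mu>.isCont_cdf[of z]
    by (auto simp: continuous_on_eq_continuous_at \<mu>.emeasure_eq_measure)
  ultimately have null: "W \<union> {c} \<union> {x2} \<in> null_sets ?\<mu>"
    by (intro null_sets.Un)
  have sub: "{x1<..x2} \<subseteq> W \<union> {c} \<union> {x2}"
  proof
    fix z assume z: "z \<in> {x1<..x2}"
    show "z \<in> W \<union> {c} \<union> {x2}"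
    proof (cases "z \<in> ?Sp")
      case True
      moreover have "z \<in> {x1..x2}" using z by simp
      ultimately show ?thesis using c by blast
    next
      case False
      with z show ?thesis unfolding W_def by (cases "z = x2") auto
    qed
  qed
  have "{x1<..x2} \<in> sets ?\<mu>"
    by (rule \<mu>.sets_M) simp
  then have "measure ?\<mu> {x1<..x2} = 0"
    by (rule measure_eq_0_null_sets[OF null_sets_subset[OF null _ sub]])
  then show ?thesis
    using F1 \<mu>.cdf_diff_eq[of x1 x2] \<open>x1 \<le> x2\<close> by (cases "x1 = x2") auto
qed

end

section \<open>Switchers between two binary treatments\<close>

lemma switchers_split:
  fixes a b :: "'a \<Rightarrow> nat"
  assumes bin: "\<And>\<omega>. \<omega> \<in> \<Omega> \<Longrightarrow> a \<omega> \<le> 1 \<and> b \<omega> \<le> 1"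
    and comp: "(\<forall>\<omega>\<in>\<Omega>. a \<omega> \<le> b \<omega>) \<or> (\<forall>\<omega>\<in>\<Omega>. b \<omega> \<le> a \<omega>)" and "d \<le> 1"
  defines "A \<equiv> {\<omega>\<in>\<Omega>. a \<omega> = d}" and "B \<equiv> {\<omega>\<in>\<Omega>. b \<omega> = d}" and "C \<equiv> {\<omega>\<in>\<Omega>. a \<omega> \<noteq> b \<omega>}"
  shows "B = A \<union> C \<and> A \<inter> C = {} \<or> A = B \<union> C \<and> B \<inter> C = {}"
proof (cases "(\<forall>\<omega>\<in>\<Omega>. a \<omega> \<le> b \<omega>) \<longleftrightarrow> d = 1")
  case True
  have "(b \<omega> = d \<longleftrightarrow> a \<omega> = d \<or> a \<omega> \<noteq> b \<omega>) \<and> \<not> (a \<omega> = d \<and> a \<omega> \<noteq> b \<omega>)" if "\<omega> \<in> \<Omega>" for \<omega>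
    using bin[OF that] comp True that \<open>d \<le> 1\<close> by auto
  then have "B = A \<union> C \<and> A \<inter> C = {}"
    unfolding A_def B_def C_def by blast
  then show ?thesis ..
next
  case False
  have "(a \<omega> = d \<longleftrightarrow> b \<omega> = d \<or> a \<omega> \<noteq> b \<omega>) \<and> \<not> (b \<omega> = d \<and> a \<omega> \<noteq> b \<omega>)" if "\<omega> \<in> \<Omega>" for \<omega>
    using bin[OF that] comp False that \<open>d \<le> 1\<close> by auto
  then have "A = B \<union> C \<and> B \<inter> C = {}"
    unfolding A_def B_def C_def by blast
  then show ?thesis ..
qed

lemma (in finite_measure) measure_signed_split:
  assumes "A \<in> sets M" "B \<in> sets M" "C \<in> sets M"
    and split: "B = A \<union> C \<and> A \<inter> C = {} \<or> A = B \<union> C \<and> B \<inter> C = {}"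
  obtains \<sigma> :: real where "\<sigma> \<in> {1, -1}"
    "\<And>E. E \<in> sets M \<Longrightarrow> measure M (B \<inter> E) - measure M (A \<inter> E) = \<sigma> * measure M (C \<inter> E)"
proof -
  have union: "measure M ((X \<union> C) \<inter> E) = measure M (X \<inter> E) + measure M (C \<inter> E)"
    if "X \<in> sets M" "X \<inter> C = {}" "E \<in> sets M" for X E
    using that assms(3) by (subst finite_measure_Union[symmetric]) (auto simp: Int_Un_distrib2)
  from split show thesis
  proof
    assume "B = A \<union> C \<and> A \<inter> C = {}"
    with union[OF assms(1)] show thesis by (intro that[of 1]) auto
  next
    assume "A = B \<union> C \<and> B \<inter> C = {}"
    with union[OF assms(2)] show thesis by (intro that[of "-1"]) auto
  qed
qed

section \<open>The fuzzy changes-in-changes model\<close>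

locale fuzzy_cic = prob_space M
  for M :: "'a measure"
    and Ypot U :: "nat \<Rightarrow> 'a \<Rightarrow> real"
    and V :: "'a \<Rightarrow> real"
    and G T :: "'a \<Rightarrow> nat"
    and v :: "nat \<Rightarrow> nat \<Rightarrow> real"
    and h :: "nat \<Rightarrow> real \<Rightarrow> nat \<Rightarrow> real"
    and Dp :: "nat \<Rightarrow> 'a \<Rightarrow> nat" and D :: "'a \<Rightarrow> nat" and Y :: "'a \<Rightarrow> real"
    and cell :: "nat \<Rightarrow> nat \<Rightarrow> nat \<Rightarrow> 'a set"
    and p :: "nat \<Rightarrow> nat \<Rightarrow> nat \<Rightarrow> real" and lam :: "nat \<Rightarrow> nat \<Rightarrow> real"
    and F :: "nat \<Rightarrow> nat \<Rightarrow> nat \<Rightarrow> real \<Rightarrow> real" and H :: "nat \<Rightarrow> real \<Rightarrow> real"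
    and S S' :: "'a set" +
  assumes Dp_def: "Dp = (\<lambda>t \<omega>. if v (G \<omega>) t \<le> V \<omega> then (1::nat) else 0)"
    and D_def: "D = (\<lambda>\<omega>. Dp (T \<omega>) \<omega>)"
    and Y_def: "Y = (\<lambda>\<omega>. if D \<omega> = 1 then Ypot 1 \<omega> else Ypot 0 \<omega>)"
    and cell_def: "cell = (\<lambda>d g t. {\<omega> \<in> space M. D \<omega> = d \<and> G \<omega> = g \<and> T \<omega> = t})"
    and p_def: "p = (\<lambda>d g t. measure M (cell d g t) / measure M {\<omega> \<in> space M. G \<omega> = g \<and> T \<omega> = t})"
    and lam_def: "lam = (\<lambda>g d. p d g 1 / p d g 0)"
    and F_def: "F = (\<lambda>d g t. ccdf M Y (cell d g t))"
    and H_def: "H = (\<lambda>d q. cdf_ext (F d 1 0) (qinv (F d 0 0) q))"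
    and S_def: "S = {\<omega> \<in> space M. Dp 0 \<omega> < Dp 1 \<omega> \<and> G \<omega> = 1}"
    and S2_def: "S' = {\<omega> \<in> space M. Dp 0 \<omega> \<noteq> Dp 1 \<omega> \<and> G \<omega> = 0}"
    and measV: "V \<in> borel_measurable M"
    and measY: "\<forall>d\<in>{0,1}. Ypot d \<in> borel_measurable M"
    and measU: "\<forall>d\<in>{0,1}. U d \<in> borel_measurable M"
    and measG: "G \<in> measurable M (count_space UNIV)"
    and measT: "T \<in> measurable M (count_space UNIV)"
    and A1: "\<forall>g\<in>{0,1}. \<forall>t\<in>{0,1}. \<forall>B\<in>sets borel.
        measure M {\<omega> \<in> space M. V \<omega> \<in> B \<and> T \<omega> = t \<and> G \<omega> = g} * measure M {\<omega> \<in> space M. G \<omega> = g}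
      = measure M {\<omega> \<in> space M. V \<omega> \<in> B \<and> G \<omega> = g} * measure M {\<omega> \<in> space M. T \<omega> = t \<and> G \<omega> = g}"
    and A2a: "p 1 1 1 > p 1 1 0"
    and A6struct: "\<forall>d\<in>{0,1}. \<forall>\<omega>\<in>space M. Ypot d \<omega> = h d (U d \<omega>) (T \<omega>)"
    and A6mono: "\<forall>d\<in>{0,1}. \<forall>t\<in>{0,1}. strict_mono (\<lambda>u. h d u t)"
    and A6indep: "\<forall>d\<in>{0,1}. \<forall>g\<in>{0,1}. \<forall>e\<in>{0,1}. \<forall>t\<in>{0,1}. \<forall>B\<in>sets borel.
        measure M {\<omega> \<in> space M. U d \<omega> \<in> B \<and> T \<omega> = t \<and> G \<omega> = g \<and> Dp 0 \<omega> = e}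
          * measure M {\<omega> \<in> space M. G \<omega> = g \<and> Dp 0 \<omega> = e}
      = measure M {\<omega> \<in> space M. U d \<omega> \<in> B \<and> G \<omega> = g \<and> Dp 0 \<omega> = e}
          * measure M {\<omega> \<in> space M. T \<omega> = t \<and> G \<omega> = g \<and> Dp 0 \<omega> = e}"
    and A7supp: "\<forall>d\<in>{0,1}. \<forall>g\<in>{0,1}. \<forall>t\<in>{0,1}. csupp M Y (cell d g t) = csupp M Y (space M)"
    and A7closed: "closed (csupp M Y (space M))"
    and A7cdf: "\<forall>d\<in>{0,1}. \<forall>g\<in>{0,1}. \<forall>t\<in>{0,1}.
        continuous_on UNIV (F d g t) \<and> strict_mono_on (csupp M Y (space M)) (F d g t)"
    and pos: "\<forall>d\<in>{0,1}. \<forall>g\<in>{0,1}. \<forall>t\<in>{0,1}. measure M (cell d g t) > 0"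
begin

lemmas [measurable] = measV measG measT

lemma v_G_measurable [measurable]: "(\<lambda>\<omega>. v (G \<omega>) t) \<in> borel_measurable M"
  using measurable_compose[OF measG, of "\<lambda>g. v g t" borel] by simp

lemma Dp_measurable [measurable]: "Dp t \<in> measurable M (count_space UNIV)"
  unfolding Dp_def by measurable

lemma D_measurable [measurable]: "D \<in> measurable M (count_space UNIV)"
  unfolding D_def by measurable

lemma Ypot_measurable [measurable]:
  "Ypot 0 \<in> borel_measurable M" "Ypot 1 \<in> borel_measurable M"
  using measY by auto

lemma Y_measurable [measurable]: "Y \<in> borel_measurable M"
  unfolding Y_def by measurable

lemma Dp_eq: "Dp t \<omega> = (if v (G \<omega>) t \<le> V \<omega> then 1 else 0)"
  by (simp add: Dp_def)

lemma Dp_le_1: "Dp t \<omega> \<le> 1"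
  by (simp add: Dp_eq)

definition group_period :: "nat \<Rightarrow> nat \<Rightarrow> 'a set" where
  "group_period g t = {\<omega> \<in> space M. T \<omega> = t \<and> G \<omega> = g}"

definition base_cell :: "nat \<Rightarrow> nat \<Rightarrow> nat \<Rightarrow> 'a set" where
  "base_cell e g t = {\<omega> \<in> space M. T \<omega> = t \<and> G \<omega> = g \<and> Dp 0 \<omega> = e}"

definition switchers :: "nat \<Rightarrow> 'a set" where
  "switchers g = {\<omega> \<in> space M. T \<omega> = 1 \<and> G \<omega> = g \<and> Dp 0 \<omega> \<noteq> Dp 1 \<omega>}"

lemma sets_group_period [measurable, simp]: "group_period g t \<in> events"
  unfolding group_period_def by measurable

lemma sets_base_cell [measurable, simp]: "base_cell e g t \<in> events"
  unfolding base_cell_def by measurable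

lemma sets_cell [measurable, simp]: "cell e g t \<in> events"
  unfolding cell_def by measurable

lemma pred_Dp_switch [measurable]: "Measurable.pred M (\<lambda>\<omega>. Dp 0 \<omega> \<noteq> Dp 1 \<omega>)"
proof -
  have "(\<lambda>\<omega>. Dp 0 \<omega> \<noteq> Dp 1 \<omega>) = (\<lambda>\<omega>. Dp 0 \<omega> = 0 \<and> Dp 1 \<omega> = 1 \<or> Dp 0 \<omega> = 1 \<and> Dp 1 \<omega> = 0)"
    by (auto simp: Dp_eq fun_eq_iff)
  then show ?thesis by simp
qed

lemma sets_switchers [measurable, simp]: "switchers g \<in> events"
  unfolding switchers_def by measurable

lemma sets_S': "S' \<in> events"
  unfolding S2_def by measurable

lemma cell_eq: "cell e g t = {\<omega> \<in> group_period g t. Dp t \<omega> = e}"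
  unfolding cell_def group_period_def D_def by auto

lemma base_cell_eq: "base_cell e g t = {\<omega> \<in> group_period g t. Dp 0 \<omega> = e}"
  unfolding base_cell_def group_period_def by auto

lemma switchers_eq: "switchers g = {\<omega> \<in> group_period g 1. Dp 0 \<omega> \<noteq> Dp 1 \<omega>}"
  unfolding switchers_def group_period_def by auto

lemma cell_period0: "cell e g 0 = base_cell e g 0"
  unfolding cell_eq base_cell_eq ..

lemma p_eq: "p e g t = prob (cell e g t) / prob (group_period g t)"
  unfolding p_def group_period_def by (simp add: conj_commute)

lemma cell_pos: "e \<in> {0,1} \<Longrightarrow> g \<in> {0,1} \<Longrightarrow> t \<in> {0,1} \<Longrightarrow> prob (cell e g t) > 0"
  using pos by blast

lemma group_period_pos:
  assumes "g \<in> {0,1}" "t \<in> {0,1}"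
  shows "prob (group_period g t) > 0"
proof -
  have "prob (cell 0 g t) \<le> prob (group_period g t)"
    by (rule finite_measure_mono) (auto simp: cell_eq)
  with cell_pos[of 0 g t] assms show ?thesis by simp
qed

lemma base_cell_share_stationary:
  assumes e: "e \<in> {0,1}" and g: "g \<in> {0,1}"
  shows "prob (base_cell e g 1) / prob (group_period g 1) = prob (base_cell e g 0) / prob (group_period g 0)"
proof -
  define B where "B = (if e = 1 then {v g 0..} else {..<v g 0})"
  have B: "B \<in> sets borel" unfolding B_def by auto
  have base: "base_cell e g t = {\<omega>\<in>space M. V \<omega> \<in> B \<and> T \<omega> = t \<and> G \<omega> = g}" for t
    using e unfolding base_cell_def B_def by (auto simp: Dp_eq)
  let ?VG = "prob {\<omega> \<in> space M. V \<omega> \<in> B \<and> G \<omega> = g}" and ?G = "prob {\<omega> \<in> space M. G \<omega> = g}"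
  have "prob (group_period g 0) \<le> ?G"
    by (rule finite_measure_mono) (auto simp: group_period_def)
  then have "?G > 0" using group_period_pos[of g 0] g by simp
  have "prob (base_cell e g t) / prob (group_period g t) = ?VG / ?G" if t: "t \<in> {0,1}" for t
  proof -
    have "prob (base_cell e g t) * ?G = ?VG * prob (group_period g t)"
      using A1 B g t unfolding base group_period_def by blast
    with group_period_pos[OF g t] \<open>?G > 0\<close> show ?thesis
      by (simp add: frac_eq_eq)
  qed
  then show ?thesis by simp
qed

lemma p_period0: "e \<in> {0,1} \<Longrightarrow> g \<in> {0,1} \<Longrightarrow> p e g 0 = prob (base_cell e g 1) / prob (group_period g 1)"
  using base_cell_share_stationary by (simp add: p_eq cell_period0)

lemma base_cell_pos:
  assumes "e \<in> {0,1}" "g \<in> {0,1}"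
  shows "prob (base_cell e g 1) > 0"
proof -
  have "p e g 0 > 0"
    using cell_pos[of e g 0] group_period_pos[of g 0] assms by (simp add: p_eq)
  then show ?thesis
    using p_period0[OF assms] group_period_pos[of g 1] assms by (simp add: zero_less_divide_iff)
qed

lemma threshold_group1: "v 1 1 \<le> v 1 0"
proof (rule ccontr)
  assume "\<not> v 1 1 \<le> v 1 0"
  then have "cell 1 1 1 \<subseteq> base_cell 1 1 1"
    unfolding cell_eq base_cell_eq group_period_def by (auto simp: Dp_eq)
  then have "prob (cell 1 1 1) \<le> prob (base_cell 1 1 1)"
    by (intro finite_measure_mono) auto
  moreover have "p 1 1 0 = prob (base_cell 1 1 1) / prob (group_period 1 1)"
    by (rule p_period0) auto
  ultimately have "p 1 1 1 \<le> p 1 1 0"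
    unfolding p_eq[of 1 1 1] by (simp add: divide_right_mono)
  with A2a show False by simp
qed

lemma Dp_comparable:
  "(\<forall>\<omega>\<in>group_period g t. Dp 0 \<omega> \<le> Dp 1 \<omega>) \<or> (\<forall>\<omega>\<in>group_period g t. Dp 1 \<omega> \<le> Dp 0 \<omega>)"
  unfolding group_period_def by (cases "v g 1 \<le> v g 0") (auto simp: Dp_eq)

lemma Dp_mono_group1: "\<omega> \<in> group_period 1 t \<Longrightarrow> Dp 0 \<omega> \<le> Dp 1 \<omega>"
  using threshold_group1 unfolding group_period_def by (auto simp: Dp_eq)

lemma S_period1: "S \<inter> {\<omega> \<in> space M. T \<omega> = 1} = switchers 1"
  using Dp_mono_group1 unfolding S_def switchers_eq group_period_def
  by (auto simp: order_less_le)

lemma S'_period1: "S' \<inter> {\<omega> \<in> space M. T \<omega> = 1} = switchers 0"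
  unfolding S2_def switchers_def by auto

lemma switchers_signed_split:
  assumes "e \<in> {0,1}"
  obtains \<sigma> :: real where "\<sigma> \<in> {1, -1}"
    "\<And>E. E \<in> events \<Longrightarrow> prob (cell e g 1 \<inter> E) - prob (base_cell e g 1 \<inter> E) = \<sigma> * prob (switchers g \<inter> E)"
proof -
  have "cell e g 1 = base_cell e g 1 \<union> switchers g \<and> base_cell e g 1 \<inter> switchers g = {}
      \<or> base_cell e g 1 = cell e g 1 \<union> switchers g \<and> cell e g 1 \<inter> switchers g = {}"
    unfolding cell_eq base_cell_eq switchers_eq
    by (rule switchers_split) (use Dp_le_1 Dp_comparable assms in auto)
  with measure_signed_split[of "base_cell e g 1" "cell e g 1" "switchers g"] that show thesis
    by auto
qed

end

locale fuzzy_cic_arm = fuzzy_cic +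
  fixes d :: nat
  assumes arm: "d \<in> {0,1}"
begin

lemma Ypot_arm_measurable [measurable]: "Ypot d \<in> borel_measurable M"
  using measY arm by blast

lemma U_measurable [measurable]: "U d \<in> borel_measurable M"
  using measU arm by blast

lemma Ypot_on_base_cell: "\<omega> \<in> base_cell e g t \<Longrightarrow> Ypot d \<omega> = h d (U d \<omega>) t"
  using A6struct arm by (auto simp: base_cell_def)

lemma h_strict_mono: "t \<in> {0,1} \<Longrightarrow> strict_mono (\<lambda>u. h d u t)"
  using A6mono arm by blast

lemma h_le_iff: "t \<in> {0,1} \<Longrightarrow> h d u t \<le> h d w t \<longleftrightarrow> u \<le> w"
  using strict_mono_less_eq[OF h_strict_mono, of t u w] by simp

lemma h_eq_iff: "t \<in> {0,1} \<Longrightarrow> h d u t = h d w t \<longleftrightarrow> u = w"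
  using strict_mono_eq[OF h_strict_mono, of t u w] by simp

lemma F_eq: "F d g t = ccdf M (Ypot d) (cell d g t)"
proof -
  have "{\<omega>\<in>cell d g t. Y \<omega> \<le> y} = {\<omega>\<in>cell d g t. Ypot d \<omega> \<le> y}" for y
    using arm unfolding cell_def Y_def by auto
  then show ?thesis by (simp add: F_def ccdf_def fun_eq_iff)
qed

lemma F_continuous: "g \<in> {0,1} \<Longrightarrow> t \<in> {0,1} \<Longrightarrow> continuous_on UNIV (F d g t)"
  using A7cdf arm by blast

lemma F_strict_mono: "g \<in> {0,1} \<Longrightarrow> t \<in> {0,1} \<Longrightarrow> strict_mono_on (csupp M Y (space M)) (F d g t)"
  using A7cdf arm by blast

definition U_law :: "nat \<Rightarrow> real set \<Rightarrow> real" where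
  "U_law g B = prob {\<omega> \<in> base_cell d g 0. U d \<omega> \<in> B} / prob (base_cell d g 0)"

lemma U_law_stationary:
  assumes g: "g \<in> {0,1}" and B: "B \<in> sets borel"
  shows "prob {\<omega> \<in> base_cell d g 1. U d \<omega> \<in> B} / prob (base_cell d g 1) = U_law g B"
proof -
  let ?UGD = "prob {\<omega> \<in> space M. U d \<omega> \<in> B \<and> G \<omega> = g \<and> Dp 0 \<omega> = d}"
    and ?GD = "prob {\<omega> \<in> space M. G \<omega> = g \<and> Dp 0 \<omega> = d}"
  have "prob (base_cell d g 0) \<le> ?GD"
    by (rule finite_measure_mono) (auto simp: base_cell_def)
  then have "?GD > 0"
    using cell_pos[of d g 0] arm g by (simp add: cell_period0)
  have "prob {\<omega> \<in> base_cell d g t. U d \<omega> \<in> B} / prob (base_cell d g t) = ?UGD / ?GD"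
    if t: "t \<in> {0,1}" "prob (base_cell d g t) > 0" for t
  proof -
    have "{\<omega> \<in> base_cell d g t. U d \<omega> \<in> B}
        = {\<omega> \<in> space M. U d \<omega> \<in> B \<and> T \<omega> = t \<and> G \<omega> = g \<and> Dp 0 \<omega> = d}"
      by (auto simp: base_cell_def)
    moreover have "prob {\<omega> \<in> space M. U d \<omega> \<in> B \<and> T \<omega> = t \<and> G \<omega> = g \<and> Dp 0 \<omega> = d} * ?GD
        = ?UGD * prob (base_cell d g t)"
      using A6indep arm g t(1) B unfolding base_cell_def by blast
    ultimately have "prob {\<omega> \<in> base_cell d g t. U d \<omega> \<in> B} * ?GD = ?UGD * prob (base_cell d g t)"
      by simp
    with t \<open>?GD > 0\<close> show ?thesis by (simp add: frac_eq_eq)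
  qed
  with base_cell_pos[OF arm g] cell_pos[of d g 0] arm g show ?thesis
    by (simp add: U_law_def cell_period0)
qed

lemma ccdf_period1_eq_U_law:
  assumes g: "g \<in> {0,1}"
  shows "ccdf M (Ypot d) (base_cell d g 1) y = U_law g {u. h d u 1 \<le> y}"
proof -
  have "(\<lambda>u. h d u 1) \<in> borel_measurable borel"
    using h_strict_mono[of 1] by (intro borel_measurable_mono strict_mono_mono) simp
  then have "{u. h d u 1 \<le> y} \<in> sets borel"
    using measurable_sets[of "\<lambda>u. h d u 1" borel borel "{..y}"] by (simp add: vimage_def)
  moreover have "{\<omega> \<in> base_cell d g 1. Ypot d \<omega> \<le> y} = {\<omega> \<in> base_cell d g 1. U d \<omega> \<in> {u. h d u 1 \<le> y}}"
    by (auto simp: Ypot_on_base_cell)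
  ultimately show ?thesis
    using U_law_stationary[OF g, of "{u. h d u 1 \<le> y}"] by (simp add: ccdf_def)
qed

lemma U_law_atMost: "U_law g {..a} = F d g 0 (h d a 0)"
proof -
  have "{\<omega> \<in> cell d g 0. Ypot d \<omega> \<le> h d a 0} = {\<omega> \<in> base_cell d g 0. U d \<omega> \<in> {..a}}"
    by (auto simp: cell_period0 Ypot_on_base_cell h_le_iff)
  then show ?thesis
    by (simp add: U_law_def F_eq ccdf_def cell_period0)
qed

lemma U_law_lessThan:
  assumes g: "g \<in> {0,1}"
  shows "U_law g {..<a} = U_law g {..a}"
proof -
  have "isCont (ccdf M (Ypot d) (cell d g 0)) (h d a 0)"
    using F_continuous[OF g, of 0] by (simp add: F_eq continuous_on_eq_continuous_at)
  then have "prob {\<omega> \<in> cell d g 0. Ypot d \<omega> = h d a 0} = 0"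
    using isCont_ccdf_iff cell_pos[of d g 0] arm g by simp
  moreover have "{\<omega> \<in> cell d g 0. Ypot d \<omega> = h d a 0} = {\<omega> \<in> base_cell d g 0. U d \<omega> = a}"
    by (auto simp: cell_period0 Ypot_on_base_cell h_eq_iff)
  moreover have "{\<omega> \<in> base_cell d g 0. U d \<omega> \<in> {..a}}
      = {\<omega> \<in> base_cell d g 0. U d \<omega> \<in> {..<a}} \<union> {\<omega> \<in> base_cell d g 0. U d \<omega> \<in> {a}}"
    by auto
  moreover have "prob {\<omega> \<in> base_cell d g 0. U d \<omega> \<in> {..a}}
      = prob {\<omega> \<in> base_cell d g 0. U d \<omega> \<in> {..<a}} + prob {\<omega> \<in> base_cell d g 0. U d \<omega> \<in> {a}}"
    unfolding \<open>{\<omega> \<in> base_cell d g 0. U d \<omega> \<in> {..a}} = _\<close>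
    by (intro finite_measure_Union sets_Collect_restrict_vimage[OF sets_base_cell U_measurable]) auto
  ultimately show ?thesis
    by (simp add: U_law_def)
qed

lemma F_period0_flat:
  assumes "x1 \<le> x2" "F d 0 0 x1 = F d 0 0 x2"
  shows "F d 1 0 x1 = F d 1 0 x2"
proof -
  have supp: "csupp M Y (cell d 1 0) = csupp M Y (space M)"
    using A7supp arm by blast
  have "strict_mono_on (csupp M Y (cell d 1 0)) (ccdf M Y (cell d 0 0))"
    using F_strict_mono[of 0 0] supp by (simp add: F_def)
  moreover have "closed (csupp M Y (cell d 1 0))"
    using A7closed supp by simp
  moreover have "continuous_on UNIV (ccdf M Y (cell d 1 0))"
    using F_continuous[of 1 0] by (simp add: F_def)
  moreover have "prob (cell d 0 0) > 0" "prob (cell d 1 0) > 0"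
    using cell_pos arm by auto
  ultimately show ?thesis
    using ccdf_flat_transfer[OF sets_cell _ sets_cell _ Y_measurable] assms unfolding F_def by blast
qed

lemma F_period0_cdf:
  assumes "g \<in> {0,1}"
  shows "mono (F d g 0)" "\<And>x. F d g 0 x \<le> 1" "(F d g 0 \<longlongrightarrow> 0) at_bot" "(F d g 0 \<longlongrightarrow> 1) at_top"
proof -
  have "prob (cell d g 0) > 0"
    using cell_pos arm assms by auto
  note props = ccdf_mono ccdf_le_1 ccdf_tendsto_at_bot ccdf_tendsto_at_top
  show "mono (F d g 0)" "\<And>x. F d g 0 x \<le> 1" "(F d g 0 \<longlongrightarrow> 0) at_bot" "(F d g 0 \<longlongrightarrow> 1) at_top"
    unfolding F_def by (rule props[OF sets_cell \<open>prob (cell d g 0) > 0\<close> Y_measurable])+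
qed

lemma H_F: "H d (F d 0 0 x) = F d 1 0 x"
proof -
  have "cdf_ext (F d 1 0) (qinv (F d 0 0) (F d 0 0 x)) = F d 1 0 x"
  proof (rule cdf_ext_qinv_comp)
    show "mono (F d 0 0)" "mono (F d 1 0)" "(F d 1 0 \<longlongrightarrow> 0) at_bot"
      using F_period0_cdf by auto
    show "continuous_on UNIV (F d 0 0)"
      using F_continuous by auto
  qed (rule F_period0_flat)
  then show ?thesis by (simp add: H_def)
qed

lemma H_0: "H d 0 = 0"
proof -
  have "F d 0 0 x \<ge> 0" for x
    by (simp add: F_def ccdf_def)
  then show ?thesis
    using cdf_ext_qinv_zero[of "F d 0 0" "F d 1 0"] by (simp add: H_def)
qed

lemma H_1: "H d 1 = 1"
proof -
  have "cdf_ext (F d 1 0) (qinv (F d 0 0) 1) = 1"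
  proof (rule cdf_ext_qinv_one)
    show "mono (F d 0 0)" "\<And>x. F d 0 0 x \<le> 1" "mono (F d 1 0)"
      "(F d 1 0 \<longlongrightarrow> 0) at_bot" "(F d 1 0 \<longlongrightarrow> 1) at_top"
      using F_period0_cdf by auto
    show "continuous_on UNIV (F d 0 0)"
      using F_continuous by auto
  qed (rule F_period0_flat)
  then show ?thesis by (simp add: H_def)
qed

lemma U_law_transport:
  assumes down: "\<And>u w. u \<le> w \<Longrightarrow> w \<in> B \<Longrightarrow> u \<in> B"
  shows "U_law 1 B = H d (U_law 0 B)"
proof (rule down_closed_real_cases[OF down])
  assume "B = {}"
  then show ?thesis by (simp add: U_law_def H_0)
next
  assume "B = UNIV"
  moreover have "U_law g UNIV = 1" if "g \<in> {0,1}" for g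
    using cell_pos[of d g 0] arm that by (simp add: U_law_def cell_period0)
  ultimately show ?thesis by (simp add: H_1)
next
  fix a assume "B = {..<a}"
  then show ?thesis by (simp add: U_law_lessThan U_law_atMost H_F)
next
  fix a assume "B = {..a}"
  then show ?thesis by (simp add: U_law_atMost H_F)
qed

theorem cic_transport:
  "ccdf M (Ypot d) (base_cell d 1 1) y = H d (ccdf M (Ypot d) (base_cell d 0 1) y)"
proof -
  have "ccdf M (Ypot d) (base_cell d 1 1) y = U_law 1 {u. h d u 1 \<le> y}"
    by (rule ccdf_period1_eq_U_law) simp
  also have "\<dots> = H d (U_law 0 {u. h d u 1 \<le> y})"
  proof (rule U_law_transport)
    fix u w assume "u \<le> w" "w \<in> {u. h d u 1 \<le> y}"
    moreover have "h d u 1 \<le> h d w 1"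
      using \<open>u \<le> w\<close> h_le_iff[of 1 u w] by simp
    ultimately show "u \<in> {u. h d u 1 \<le> y}" by simp
  qed
  also have "U_law 0 {u. h d u 1 \<le> y} = ccdf M (Ypot d) (base_cell d 0 1) y"
    by (rule ccdf_period1_eq_U_law[symmetric]) simp
  finally show ?thesis .
qed

lemma ccdf_switchers_group1:
  "ccdf M (Ypot d) (switchers 1) y
     = (p d 1 1 * F d 1 1 y - p d 1 0 * ccdf M (Ypot d) (base_cell d 1 1) y) / (p d 1 1 - p d 1 0)"
proof -
  let ?E = "{\<omega> \<in> space M. Ypot d \<omega> \<le> y}"
  let ?c = "cell d 1 1" and ?b = "base_cell d 1 1" and ?s = "switchers 1" and ?W = "group_period 1 1"
  obtain \<sigma> where \<sigma>: "\<sigma> \<in> {1, -1}"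
    and split: "\<And>E. E \<in> events \<Longrightarrow> prob (?c \<inter> E) - prob (?b \<inter> E) = \<sigma> * prob (?s \<inter> E)"
    using switchers_signed_split[OF arm] by blast
  have mass: "prob ?c - prob ?b = \<sigma> * prob ?s"
    using split[of "space M"] by simp
  have below: "prob (?c \<inter> ?E) - prob (?b \<inter> ?E) = \<sigma> * prob (?s \<inter> ?E)"
    by (rule split) measurable
  have p: "p d 1 1 = prob ?c / prob ?W" "p d 1 0 = prob ?b / prob ?W"
    using p_eq p_period0 arm by auto
  have "prob ?W > 0" "prob ?c > 0" "prob ?b > 0"
    using group_period_pos cell_pos arm base_cell_pos by auto
  then have "(p d 1 1 * F d 1 1 y - p d 1 0 * ccdf M (Ypot d) ?b y) / (p d 1 1 - p d 1 0)
      = (prob (?c \<inter> ?E) - prob (?b \<inter> ?E)) / (prob ?c - prob ?b)"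
    unfolding p F_eq ccdf_eq_measure_Int[OF sets_cell] ccdf_eq_measure_Int[OF sets_base_cell]
    by (simp add: diff_divide_distrib[symmetric])
  also have "\<dots> = ccdf M (Ypot d) ?s y"
    unfolding mass below ccdf_eq_measure_Int[OF sets_switchers] using \<sigma> by auto
  finally show ?thesis ..
qed

lemma ccdf_base_cell_group0:
  "ccdf M (Ypot d) (base_cell d 0 1) y
     = lam 0 d * F d 0 1 y + (if prob S' = 0 then 0 else (1 - lam 0 d) * ccdf M (Ypot d) (switchers 0) y)"
proof -
  let ?E = "{\<omega> \<in> space M. Ypot d \<omega> \<le> y}"
  let ?c = "cell d 0 1" and ?b = "base_cell d 0 1" and ?s = "switchers 0"
  obtain \<sigma> where \<sigma>: "\<sigma> \<in> {1, -1}"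
    and split: "\<And>E. E \<in> events \<Longrightarrow> prob (?c \<inter> E) - prob (?b \<inter> E) = \<sigma> * prob (?s \<inter> E)"
    using switchers_signed_split[OF arm] by blast
  have mass: "prob ?c - prob ?b = \<sigma> * prob ?s"
    using split[of "space M"] by simp
  have below: "prob (?c \<inter> ?E) - prob (?b \<inter> ?E) = \<sigma> * prob (?s \<inter> ?E)"
    by (rule split) measurable
  have p: "p d 0 1 = prob ?c / prob (group_period 0 1)" "p d 0 0 = prob ?b / prob (group_period 0 1)"
    using p_eq p_period0 arm by auto
  have "prob (group_period 0 1) > 0" and c: "prob ?c > 0" and b: "prob ?b > 0"
    using group_period_pos cell_pos arm base_cell_pos by auto
  then have lam: "lam 0 d = prob ?c / prob ?b"
    unfolding lam_def p by simp
  have "1 - lam 0 d = - (\<sigma> * prob ?s) / prob ?b"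
    using b unfolding lam mass[symmetric] by (simp add: field_simps)
  then have "(1 - lam 0 d) * ccdf M (Ypot d) ?s y = - \<sigma> * (prob ?s * ccdf M (Ypot d) ?s y) / prob ?b"
    by simp
  also have "prob ?s * ccdf M (Ypot d) ?s y = prob (?s \<inter> ?E)"
    by (rule measure_mult_ccdf[OF sets_switchers])
  finally have switch_term: "(1 - lam 0 d) * ccdf M (Ypot d) ?s y = - \<sigma> * prob (?s \<inter> ?E) / prob ?b" .
  have "prob (?s \<inter> ?E) = 0" if "prob S' = 0"
  proof -
    have "prob (?s \<inter> ?E) \<le> prob S'"
      by (rule finite_measure_mono[OF _ sets_S']) (auto simp: switchers_def S2_def)
    with that show ?thesis by (simp add: measure_le_0_iff)
  qed
  with switch_term have "(if prob S' = 0 then 0 else (1 - lam 0 d) * ccdf M (Ypot d) ?s y)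
      = - \<sigma> * prob (?s \<inter> ?E) / prob ?b"
    by simp
  moreover have "lam 0 d * F d 0 1 y = prob (?c \<inter> ?E) / prob ?b"
    using c by (simp add: lam F_eq ccdf_eq_measure_Int)
  ultimately show ?thesis
    using below by (simp add: ccdf_eq_measure_Int diff_divide_distrib[symmetric] add_divide_distrib[symmetric])
qed

theorem ccdf_compliers:
  "ccdf M (Ypot d) (S \<inter> {\<omega> \<in> space M. T \<omega> = 1}) y
     = (p d 1 1 * F d 1 1 y
        - p d 1 0 * H d (lam 0 d * F d 0 1 y
            + (if prob S' = 0 then 0
               else (1 - lam 0 d) * ccdf M (Ypot d) (S' \<inter> {\<omega> \<in> space M. T \<omega> = 1}) y)))
       / (p d 1 1 - p d 1 0)"
  unfolding S_period1 S'_period1 ccdf_switchers_group1 cic_transport ccdf_base_cell_group0 ..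

end

theorem mainTheorem5:
  fixes M :: "'a measure"
    and Ypot U :: "nat \<Rightarrow> 'a \<Rightarrow> real"
    and V :: "'a \<Rightarrow> real"
    and G T :: "'a \<Rightarrow> nat"
    and v :: "nat \<Rightarrow> nat \<Rightarrow> real"
    and h :: "nat \<Rightarrow> real \<Rightarrow> nat \<Rightarrow> real"
    and Dp :: "nat \<Rightarrow> 'a \<Rightarrow> nat" and D :: "'a \<Rightarrow> nat" and Y :: "'a \<Rightarrow> real"
    and cell :: "nat \<Rightarrow> nat \<Rightarrow> nat \<Rightarrow> 'a set"
    and p :: "nat \<Rightarrow> nat \<Rightarrow> nat \<Rightarrow> real" and lam :: "nat \<Rightarrow> nat \<Rightarrow> real"
    and F :: "nat \<Rightarrow> nat \<Rightarrow> nat \<Rightarrow> real \<Rightarrow> real" and H :: "nat \<Rightarrow> real \<Rightarrow> real"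
    and S S' :: "'a set"
  assumes Dp_def: "Dp = (\<lambda>t \<omega>. if v (G \<omega>) t \<le> V \<omega> then (1::nat) else 0)"
    and D_def: "D = (\<lambda>\<omega>. Dp (T \<omega>) \<omega>)"
    and Y_def: "Y = (\<lambda>\<omega>. if D \<omega> = 1 then Ypot 1 \<omega> else Ypot 0 \<omega>)"
    and cell_def: "cell = (\<lambda>d g t. {\<omega> \<in> space M. D \<omega> = d \<and> G \<omega> = g \<and> T \<omega> = t})"
    and p_def: "p = (\<lambda>d g t. measure M (cell d g t) / measure M {\<omega> \<in> space M. G \<omega> = g \<and> T \<omega> = t})"
    and lam_def: "lam = (\<lambda>g d. p d g 1 / p d g 0)"
    and F_def: "F = (\<lambda>d g t. ccdf M Y (cell d g t))"
    and H_def: "H = (\<lambda>d q. cdf_ext (F d 1 0) (qinv (F d 0 0) q))"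
    and S_def: "S = {\<omega> \<in> space M. Dp 0 \<omega> < Dp 1 \<omega> \<and> G \<omega> = 1}"
    and S2_def: "S' = {\<omega> \<in> space M. Dp 0 \<omega> \<noteq> Dp 1 \<omega> \<and> G \<omega> = 0}"
    and prob: "prob_space M"
    and measV: "V \<in> borel_measurable M"
    and measY: "\<forall>d\<in>{0,1}. Ypot d \<in> borel_measurable M"
    and measU: "\<forall>d\<in>{0,1}. U d \<in> borel_measurable M"
    and measG: "G \<in> measurable M (count_space UNIV)"
    and measT: "T \<in> measurable M (count_space UNIV)"
    and binGT: "\<forall>\<omega>\<in>space M. G \<omega> \<in> {0,1} \<and> T \<omega> \<in> {0,1}"
    and A1: "\<forall>g\<in>{0,1}. \<forall>t\<in>{0,1}. \<forall>B\<in>sets borel.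
        measure M {\<omega> \<in> space M. V \<omega> \<in> B \<and> T \<omega> = t \<and> G \<omega> = g} * measure M {\<omega> \<in> space M. G \<omega> = g}
      = measure M {\<omega> \<in> space M. V \<omega> \<in> B \<and> G \<omega> = g} * measure M {\<omega> \<in> space M. T \<omega> = t \<and> G \<omega> = g}"
    and A2a: "p 1 1 1 > p 1 1 0"
    and A2b: "p 1 1 1 - p 1 1 0 > p 1 0 1 - p 1 0 0"
    and A6struct: "\<forall>d\<in>{0,1}. \<forall>\<omega>\<in>space M. Ypot d \<omega> = h d (U d \<omega>) (T \<omega>)"
    and A6mono: "\<forall>d\<in>{0,1}. \<forall>t\<in>{0,1}. strict_mono (\<lambda>u. h d u t)"
    and A6indep: "\<forall>d\<in>{0,1}. \<forall>g\<in>{0,1}. \<forall>e\<in>{0,1}. \<forall>t\<in>{0,1}. \<forall>B\<in>sets borel.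
        measure M {\<omega> \<in> space M. U d \<omega> \<in> B \<and> T \<omega> = t \<and> G \<omega> = g \<and> Dp 0 \<omega> = e}
          * measure M {\<omega> \<in> space M. G \<omega> = g \<and> Dp 0 \<omega> = e}
      = measure M {\<omega> \<in> space M. U d \<omega> \<in> B \<and> G \<omega> = g \<and> Dp 0 \<omega> = e}
          * measure M {\<omega> \<in> space M. T \<omega> = t \<and> G \<omega> = g \<and> Dp 0 \<omega> = e}"
    and A7supp: "\<forall>d\<in>{0,1}. \<forall>g\<in>{0,1}. \<forall>t\<in>{0,1}. csupp M Y (cell d g t) = csupp M Y (space M)"
    and A7int: "is_interval (csupp M Y (space M))"
    and A7closed: "closed (csupp M Y (space M))"
    and A7cdf: "\<forall>d\<in>{0,1}. \<forall>g\<in>{0,1}. \<forall>t\<in>{0,1}.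
        continuous_on UNIV (F d g t) \<and> strict_mono_on (csupp M Y (space M)) (F d g t)"
    and pos: "\<forall>d\<in>{0,1}. \<forall>g\<in>{0,1}. \<forall>t\<in>{0,1}. measure M (cell d g t) > 0"
  shows "\<forall>d\<in>{0,1}. \<forall>y. ccdf M (Ypot d) (S \<inter> {\<omega> \<in> space M. T \<omega> = 1}) y
     = (p d 1 1 * F d 1 1 y
        - p d 1 0 * H d (lam 0 d * F d 0 1 y
            + (if measure M S' = 0 then 0
               else (1 - lam 0 d) * ccdf M (Ypot d) (S' \<inter> {\<omega> \<in> space M. T \<omega> = 1}) y)))
       / (p d 1 1 - p d 1 0)"
proof -
  have arm: "fuzzy_cic_arm M Ypot U V G T v h Dp D Y cell p lam F H S S' d" if "d \<in> {0, 1}" for d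
    by (intro fuzzy_cic_arm.intro fuzzy_cic.intro fuzzy_cic_axioms.intro fuzzy_cic_arm_axioms.intro)
      (fact assms that)+
  show ?thesis
    by (intro ballI allI fuzzy_cic_arm.ccdf_compliers[OF arm])
qed

end
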